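(* Let $\boldsymbol\mu\in\mathbb R^N$ with $\boldsymbol\mu>\mathbf 0$, and assume that $\mathbf I-\mathbf G$ is irreducible for every $\mathbf G\in\mathcal G(\boldsymbol\mu)$. Then there exists $\mathbf p\in\mathbb R^N$, $\mathbf p\geq\mathbf 0$, with $\mathbf A(\boldsymbol\mu)\mathbf p\geq\mathbf n(\boldsymbol\mu)$ if and only if $\max_{\mathbf G\in\mathcal G(\boldsymbol\mu)}\lambda(\mathbf I-\mathbf G)<1$.
   Context: Multicast system: $N\geq 2$ transmitters $T_1,\dots,T_N$; transmitter $T_i$ has $K_i\geq1$ receivers $R_i^{k}$, $k\in\mathcal K_i=\{1,\dots,K_i\}$; $K=\sum_i K_i$. Channel gains $g_{r_i^{k},t_j}\geq 0$ (from $T_j$ to $R_i^k$) with $g_{r_i^{k},t_i}>0$; noise variance $\sigma^2>0$. For $\boldsymbol\mu\in\mathbb R^N$, let $\mathbf a_i^{k}(\boldsymbol\mu)\in\mathbb R^{1\times N}$ be the row vector whose $i$-th entry is $1$ and whose $j$-th entry, $j\neq i$, is $-\mu_i\, g_{r_i^{k},t_j}/g_{r_i^{k},t_i}$, and let $n_i^{k}(\boldsymbol\mu)=\mu_i\sigma^2/g_{r_i^{k},t_i}$. $\mathbf A(\boldsymbol\mu)\in\mathbb R^{K\times N}$ is the matrix whose rows are all $\mathbf a_i^{k}(\boldsymbol\mu)$ ($i=1,\dots,N$, $k\in\mathcal K_i$), and $\mathbf n(\boldsymbol\mu)\in\mathbb R^K$ the vector of the corresponding $n_i^k(\boldsymbol\mu)$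 in the same order. $\mathcal G(\boldsymbol\mu)$ is the set of all $N\times N$ matrices whose $i$-th row is $\mathbf a_i^{k_i}(\boldsymbol\mu)$ for some choice $k_i\in\mathcal K_i$, $i=1,\dots,N$ (the "embedded unicast systems"). For a nonnegative square matrix $\mathbf X$, $\lambda(\mathbf X)$ denotes its Perron–Frobenius eigenvalue (spectral radius). Inequalities are componentwise; $\boldsymbol\mu>\mathbf 0$ means all entries positive. *)

theory Defs
  imports "Jordan_Normal_Form.Spectral_Radius"
begin

(* Indexing conventions (0-based):
   transmitters T_i, i < N;  receivers R_i^k of T_i, k < K i;
   g i k j = channel gain g_{r_i^k, t_j} (from T_j to receiver R_i^k). *)

definition a_entry :: "(nat \<Rightarrow> nat \<Rightarrow> nat \<Rightarrow> real) \<Rightarrow> real vec \<Rightarrow> nat \<Rightarrow> nat \<Rightarrow> nat \<Rightarrow> real" where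
  "a_entry g mu i k j = (if j = i then 1 else - (mu $ i) * g i k j / g i k i)"

definition n_entry :: "(nat \<Rightarrow> nat \<Rightarrow> nat \<Rightarrow> real) \<Rightarrow> real \<Rightarrow> real vec \<Rightarrow> nat \<Rightarrow> nat \<Rightarrow> real" where
  "n_entry g sigma2 mu i k = mu $ i * sigma2 / g i k i"

definition rx_list :: "nat \<Rightarrow> (nat \<Rightarrow> nat) \<Rightarrow> (nat \<times> nat) list" where
  "rx_list N K = concat (map (\<lambda>i. map (\<lambda>k. (i, k)) [0..<K i]) [0..<N])"

definition A_mat :: "nat \<Rightarrow> (nat \<Rightarrow> nat) \<Rightarrow> (nat \<Rightarrow> nat \<Rightarrow> nat \<Rightarrow> real) \<Rightarrow> real vec \<Rightarrow> real mat" where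
  "A_mat N K g mu = mat (length (rx_list N K)) N
     (\<lambda>(r, j). case rx_list N K ! r of (i, k) \<Rightarrow> a_entry g mu i k j)"

definition n_vec :: "nat \<Rightarrow> (nat \<Rightarrow> nat) \<Rightarrow> (nat \<Rightarrow> nat \<Rightarrow> nat \<Rightarrow> real) \<Rightarrow> real \<Rightarrow> real vec \<Rightarrow> real vec" where
  "n_vec N K g sigma2 mu = vec (length (rx_list N K))
     (\<lambda>r. case rx_list N K ! r of (i, k) \<Rightarrow> n_entry g sigma2 mu i k)"

definition G_set :: "nat \<Rightarrow> (nat \<Rightarrow> nat) \<Rightarrow> (nat \<Rightarrow> nat \<Rightarrow> nat \<Rightarrow> real) \<Rightarrow> real vec \<Rightarrow> real mat set" where
  "G_set N K g mu = {mat N N (\<lambda>(i, j). a_entry g mu i (c i) j) | c. \<forall>i<N. c i < K i}"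

definition vec_le :: "real vec \<Rightarrow> real vec \<Rightarrow> bool" where
  "vec_le x y \<longleftrightarrow> dim_vec x = dim_vec y \<and> (\<forall>r<dim_vec x. x $ r \<le> y $ r)"

definition irreducible_mat :: "real mat \<Rightarrow> bool" where
  "irreducible_mat X \<longleftrightarrow> dim_row X = dim_col X \<and>
     (\<forall>i<dim_row X. \<forall>j<dim_row X.
        (i, j) \<in> {(a, b). a < dim_row X \<and> b < dim_row X \<and> X $$ (a, b) \<noteq> 0}\<^sup>+)"

definition pf_lambda :: "real mat \<Rightarrow> real" where
  "pf_lambda X = spectral_radius (map_mat complex_of_real X)"

end

theory Submission
  imports Defs
begin

text \<open>Write \<open>B\<^sub>c = I - G\<^sub>c\<close> for the embedded unicast system that keeps receiver
  \<open>c i\<close> of each transmitter \<open>i\<close>. Then \<open>B\<^sub>c\<close> is nonnegative and the constraint of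
  receiver \<open>(i, c i)\<close> reads \<open>p\<^sub>i - (B\<^sub>c p)\<^sub>i \<ge> n\<^sub>i\<close>. A feasible power vector thus
  satisfies \<open>B\<^sub>c p < p\<close> with \<open>p > 0\<close> for every \<open>c\<close>, which forces \<open>\<lambda>(B\<^sub>c) < 1\<close>.
  Conversely, if all \<open>\<lambda>(B\<^sub>c) < 1\<close>, then \<open>B\<^sub>c x \<le> x\<close> implies \<open>x \<ge> 0\<close> (iterate and let
  \<open>B\<^sub>c\<^sup>k x\<close> decay), so every unicast system has a nonnegative solution \<open>x\<^sub>c\<close> meeting its
  constraints with equality. The \<open>x\<^sub>c\<close> of largest total power is feasible for all
  receivers: if it violated the constraint of receiver \<open>(i, k)\<close>, switching \<open>c i\<close> to \<open>k\<close>
  would give a solution dominating \<open>x\<^sub>c\<close>, strictly in entry \<open>i\<close>.\<close>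

lemma pow_mat_smult:
  fixes A :: "'a :: comm_ring_1 mat"
  assumes A: "A \<in> carrier_mat n n"
  shows "(a \<cdot>\<^sub>m A) ^\<^sub>m k = a ^ k \<cdot>\<^sub>m A ^\<^sub>m k"
proof (induction k)
  case 0
  show ?case using A by (intro eq_matI) auto
next
  case (Suc k)
  have Ak: "A ^\<^sub>m k \<in> carrier_mat n n" using A by simp
  have "(a \<cdot>\<^sub>m A) ^\<^sub>m Suc k = (a ^ k \<cdot>\<^sub>m A ^\<^sub>m k) * (a \<cdot>\<^sub>m A)" using Suc by simp
  also have "\<dots> = a ^ k \<cdot>\<^sub>m (a \<cdot>\<^sub>m (A ^\<^sub>m k * A))"
    by (simp add: mult_smult_assoc_mat[OF Ak smult_carrier_mat[OF A]] mult_smult_distrib[OF Ak A])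
  finally show ?case by (intro eq_matI) (auto simp: mult.commute)
qed

lemma spectral_radius_smult_le:
  assumes A: "A \<in> carrier_mat n n" and n: "0 < n" and a: "a \<noteq> 0"
  shows "spectral_radius (a \<cdot>\<^sub>m A) \<le> cmod a * spectral_radius A"
proof -
  have aA: "a \<cdot>\<^sub>m A \<in> carrier_mat n n" using A by simp
  obtain e where e: "e \<in> spectrum (a \<cdot>\<^sub>m A)" and rho: "spectral_radius (a \<cdot>\<^sub>m A) = cmod e"
    using spectral_radius_mem_max(1)[OF aA n] by auto
  then obtain v where v: "v \<in> carrier_vec n" "v \<noteq> 0\<^sub>v n" and av: "(a \<cdot>\<^sub>m A) *\<^sub>v v = e \<cdot>\<^sub>v v"
    using aA unfolding spectrum_def eigenvalue_def eigenvector_def by auto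
  have "a * (A *\<^sub>v v) $ i = e * v $ i" if "i < n" for i
    using arg_cong[OF av, of "\<lambda>w. w $ i"] that A v by simp
  then have "A *\<^sub>v v = (e / a) \<cdot>\<^sub>v v"
    using A v a by (intro eq_vecI) (auto simp: field_simps)
  then have "e / a \<in> spectrum A"
    using A v unfolding spectrum_def eigenvalue_def eigenvector_def by auto
  then have "cmod (e / a) \<le> spectral_radius A"
    using spectral_radius_mem_max(2)[OF A n] by auto
  then show ?thesis using a by (simp add: rho norm_divide field_simps)
qed

lemma spectral_radius_power_bound:
  assumes A: "A \<in> carrier_mat n n" and s: "spectral_radius A < s"
  shows "\<exists>c. \<forall>k. norm_bound (A ^\<^sub>m k) (c * s ^ k)"
proof (cases "n = 0")
  case True
  then show ?thesis using A by (auto simp: norm_bound_def)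
next
  case False
  then have "0 \<le> spectral_radius A"
    using spectral_radius_mem_max(1)[OF A] by auto
  then have "0 < s" using s by simp
  define D where "D = complex_of_real (1 / s) \<cdot>\<^sub>m A"
  have D: "D \<in> carrier_mat n n" using A unfolding D_def by simp
  have "spectral_radius D \<le> spectral_radius A / s"
    using spectral_radius_smult_le[OF A _, of "complex_of_real (1 / s)"] False \<open>0 < s\<close>
    unfolding D_def by (simp add: norm_divide)
  also have "\<dots> < 1" using s \<open>0 < s\<close> by simp
  finally obtain c where c: "\<And>k. norm_bound (D ^\<^sub>m k) c"
    using spectral_radius_jnf_norm_bound_less_1_upper_triangular[OF D] by auto
  have "norm_bound (A ^\<^sub>m k) (c * s ^ k)" for k
  proof
    fix i j assume "i < dim_row (A ^\<^sub>m k)" "j < dim_col (A ^\<^sub>m k)"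
    then have ij: "i < n" "j < n" using A by (auto split: if_splits)
    have "A = complex_of_real s \<cdot>\<^sub>m D"
      using \<open>0 < s\<close> A unfolding D_def by (intro eq_matI) (auto simp flip: of_real_mult)
    then have "(A ^\<^sub>m k) $$ (i, j) = complex_of_real s ^ k * (D ^\<^sub>m k) $$ (i, j)"
      using pow_mat_smult[OF D] ij A D by simp
    moreover have "norm ((D ^\<^sub>m k) $$ (i, j)) \<le> c"
      using c[of k] ij D unfolding norm_bound_def by simp
    ultimately show "norm ((A ^\<^sub>m k) $$ (i, j)) \<le> c * s ^ k"
      using \<open>0 < s\<close> by (simp add: norm_mult norm_power mult.commute mult_left_mono)
  qed
  then show ?thesis by blast
qed

lemma pf_lambda_power_bound:
  assumes B: "B \<in> carrier_mat n n" and s: "pf_lambda B < s"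
  shows "\<exists>c. \<forall>k i j. i < n \<longrightarrow> j < n \<longrightarrow> \<bar>(B ^\<^sub>m k) $$ (i, j)\<bar> \<le> c * s ^ k"
proof -
  have C: "map_mat complex_of_real B \<in> carrier_mat n n" using B by simp
  obtain c where c: "\<And>k. norm_bound (map_mat complex_of_real B ^\<^sub>m k) (c * s ^ k)"
    using spectral_radius_power_bound[OF C] s unfolding pf_lambda_def by blast
  have "\<bar>(B ^\<^sub>m k) $$ (i, j)\<bar> \<le> c * s ^ k" if "i < n" "j < n" for k i j
    using c[of k] that B unfolding norm_bound_def
    by (simp flip: of_real_hom.mat_hom_pow[OF B])
  then show ?thesis by blast
qed

definition nonneg_mat :: "real mat \<Rightarrow> bool" where
  "nonneg_mat B \<longleftrightarrow> (\<forall>i<dim_row B. \<forall>j<dim_col B. 0 \<le> B $$ (i, j))"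

lemma mult_mat_vec_index_sum:
  assumes "M \<in> carrier_mat nr n" "x \<in> carrier_vec n" "i < nr"
  shows "(M *\<^sub>v x) $ i = (\<Sum>j<n. M $$ (i, j) * x $ j)"
  using assms by (auto simp: scalar_prod_def lessThan_atLeast0 intro!: sum.cong)

lemma nonneg_mat_mult:
  assumes "A \<in> carrier_mat nr n" "B \<in> carrier_mat n nc" "nonneg_mat A" "nonneg_mat B"
  shows "nonneg_mat (A * B)"
  using assms unfolding nonneg_mat_def
  by (auto simp: scalar_prod_def intro!: sum_nonneg)

lemma nonneg_mat_pow:
  assumes B: "B \<in> carrier_mat n n" and "nonneg_mat B"
  shows "nonneg_mat (B ^\<^sub>m k)"
proof (induction k)
  case 0
  show ?case by (auto simp: nonneg_mat_def)
next
  case (Suc k)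
  then show ?case using assms nonneg_mat_mult[of "B ^\<^sub>m k" n n B n] by simp
qed

lemma mult_mat_vec_mono:
  assumes M: "M \<in> carrier_mat nr n" and "nonneg_mat M" and x: "x \<in> carrier_vec n"
    and xz: "vec_le x z"
  shows "vec_le (M *\<^sub>v x) (M *\<^sub>v z)"
proof -
  have z: "z \<in> carrier_vec n" using x xz unfolding vec_le_def carrier_vec_def by simp
  show ?thesis
    using assms z unfolding vec_le_def nonneg_mat_def
    by (auto simp: scalar_prod_def intro!: sum_mono mult_left_mono)
qed

lemma nonneg_mat_mult_vec_nonneg:
  assumes M: "M \<in> carrier_mat nr n" and "nonneg_mat M" and x: "vec_le (0\<^sub>v n) x"
  shows "vec_le (0\<^sub>v nr) (M *\<^sub>v x)"
  using assms unfolding vec_le_def nonneg_mat_def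
  by (auto simp: scalar_prod_def intro!: sum_nonneg)

text \<open>Iterating gives \<open>x \<ge> B\<^sup>k x\<close>, and \<open>B\<^sup>k x\<close> decays geometrically.\<close>

lemma nonneg_if_mult_mat_vec_le:
  assumes B: "B \<in> carrier_mat n n" and nonneg: "nonneg_mat B" and rho: "pf_lambda B < 1"
    and x: "x \<in> carrier_vec n" and le: "vec_le (B *\<^sub>v x) x"
  shows "vec_le (0\<^sub>v n) x"
proof -
  have "max 0 (pf_lambda B) < 1" using rho by simp
  then obtain s where s: "max 0 (pf_lambda B) < s" "s < 1" using dense by blast
  then have "pf_lambda B < s" by simp
  then obtain c where c: "\<forall>k i j. i < n \<longrightarrow> j < n \<longrightarrow> \<bar>(B ^\<^sub>m k) $$ (i, j)\<bar> \<le> c * s ^ k"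
    using pf_lambda_power_bound[OF B] by blast
  have Bk: "B ^\<^sub>m k \<in> carrier_mat n n" for k using B by simp
  have iterate: "vec_le (B ^\<^sub>m k *\<^sub>v x) x" for k
  proof (induction k)
    case 0
    show ?case using B x by (simp add: vec_le_def)
  next
    case (Suc k)
    have "B ^\<^sub>m Suc k *\<^sub>v x = B ^\<^sub>m k *\<^sub>v (B *\<^sub>v x)"
      using assoc_mult_mat_vec[OF Bk B x] by simp
    then have "vec_le (B ^\<^sub>m Suc k *\<^sub>v x) (B ^\<^sub>m k *\<^sub>v x)"
      using mult_mat_vec_mono[OF Bk nonneg_mat_pow[OF B nonneg] _ le] B x by simp
    then show ?case using Suc unfolding vec_le_def by force
  qed
  define M where "M = (\<Sum>j<n. \<bar>x $ j\<bar>)"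
  have lower: "- (c * s ^ k * M) \<le> x $ i" if i: "i < n" for i k
  proof -
    have "\<bar>(B ^\<^sub>m k *\<^sub>v x) $ i\<bar> \<le> (\<Sum>j<n. \<bar>(B ^\<^sub>m k) $$ (i, j)\<bar> * \<bar>x $ j\<bar>)"
      unfolding mult_mat_vec_index_sum[OF Bk x i] by (rule order_trans[OF sum_abs]) (simp add: abs_mult)
    also have "\<dots> \<le> (\<Sum>j<n. c * s ^ k * \<bar>x $ j\<bar>)"
      using c i by (intro sum_mono mult_right_mono) auto
    finally have "- (c * s ^ k * M) \<le> (B ^\<^sub>m k *\<^sub>v x) $ i"
      unfolding M_def sum_distrib_left by linarith
    also have "\<dots> \<le> x $ i" using iterate[of k] i B unfolding vec_le_def by simp
    finally show ?thesis .
  qed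
  have "(\<lambda>k. - (c * s ^ k * M)) \<longlonglongrightarrow> - (c * 0 * M)"
    using s by (intro tendsto_intros LIMSEQ_power_zero) auto
  then have "0 \<le> x $ i" if "i < n" for i
    using LIMSEQ_le_const2[of _ 0 "x $ i"] lower[OF that] by auto
  then show ?thesis using x unfolding vec_le_def by simp
qed

lemma one_minus_mult_mat_vec:
  fixes B :: "'a :: ring_1 mat"
  assumes "B \<in> carrier_mat n n" "x \<in> carrier_vec n"
  shows "(1\<^sub>m n - B) *\<^sub>v x = x - B *\<^sub>v x"
  using minus_mult_distrib_mat_vec[OF one_carrier_mat[of n] assms] assms(2) by simp

lemma exists_nonneg_fixed_point:
  assumes B: "B \<in> carrier_mat n n" and nonneg: "nonneg_mat B" and rho: "pf_lambda B < 1"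
    and d: "d \<in> carrier_vec n" and d_nonneg: "vec_le (0\<^sub>v n) d"
  shows "\<exists>x\<in>carrier_vec n. x = B *\<^sub>v x + d \<and> vec_le (0\<^sub>v n) x"
proof -
  let ?E = "1\<^sub>m n - B"
  have E: "?E \<in> carrier_mat n n" using B by (simp add: minus_carrier_mat)
  have "det ?E \<noteq> 0"
  proof
    assume "det ?E = 0"
    then obtain v where v: "v \<in> carrier_vec n" "v \<noteq> 0\<^sub>v n" and "?E *\<^sub>v v = 0\<^sub>v n"
      using det_0_iff_vec_prod_zero[OF E] by auto
    then have "v - B *\<^sub>v v = 0\<^sub>v n" using one_minus_mult_mat_vec[OF B v(1)] by simp
    have Bv: "B *\<^sub>v v = v"
    proof (rule eq_vecI)
      fix i assume "i < dim_vec v"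
      then show "(B *\<^sub>v v) $ i = v $ i"
        using arg_cong[OF \<open>v - B *\<^sub>v v = 0\<^sub>v n\<close>, of "\<lambda>w. w $ i"] B v(1) by simp
    qed (use B v(1) in simp)
    have "vec_le (0\<^sub>v n) v"
      using nonneg_if_mult_mat_vec_le[OF B nonneg rho v(1)] Bv v(1) by (simp add: vec_le_def)
    moreover have "B *\<^sub>v (- v) = - (B *\<^sub>v v)" using B v(1) by (intro eq_vecI) auto
    then have "vec_le (0\<^sub>v n) (- v)"
      using nonneg_if_mult_mat_vec_le[OF B nonneg rho, of "- v"] Bv v(1) by (simp add: vec_le_def)
    ultimately have "v = 0\<^sub>v n" using v(1) unfolding vec_le_def by (intro eq_vecI) force+
    with v(2) show False ..
  qed
  then obtain Q where Q: "Q \<in> carrier_mat n n" and EQ: "?E * Q = 1\<^sub>m n"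
    using det_non_zero_imp_unit[OF E] unfolding Units_def by (auto simp: ring_mat_def)
  define x where "x = Q *\<^sub>v d"
  have x: "x \<in> carrier_vec n" unfolding x_def using Q d by simp
  have "?E *\<^sub>v x = d" unfolding x_def using assoc_mult_mat_vec[OF E Q d] EQ d by simp
  then have fixed: "x = B *\<^sub>v x + d"
    using one_minus_mult_mat_vec[OF B x] B x by (intro eq_vecI) auto
  have "(B *\<^sub>v x) $ i \<le> x $ i" if "i < n" for i
    using arg_cong[OF fixed, of "\<lambda>w. w $ i"] d_nonneg d B that by (simp add: vec_le_def)
  then have "vec_le (B *\<^sub>v x) x" using B x by (simp add: vec_le_def del: index_mult_mat_vec)
  then show ?thesis using fixed x nonneg_if_mult_mat_vec_le[OF B nonneg rho x] by blast
qed

lemma pf_lambda_less_1_if_mult_mat_vec_less: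
  assumes B: "B \<in> carrier_mat n n" and n: "0 < n" and nonneg: "nonneg_mat B"
    and p: "p \<in> carrier_vec n" and p_nonneg: "vec_le (0\<^sub>v n) p"
    and less: "\<forall>i<n. (B *\<^sub>v p) $ i < p $ i"
  shows "pf_lambda B < 1"
proof -
  let ?C = "map_mat complex_of_real B"
  have C: "?C \<in> carrier_mat n n" using B by simp
  obtain e where "e \<in> spectrum ?C" and rho: "pf_lambda B = cmod e"
    using spectral_radius_mem_max(1)[OF C n] unfolding pf_lambda_def by auto
  then obtain v where v: "v \<in> carrier_vec n" "v \<noteq> 0\<^sub>v n" and Cv: "?C *\<^sub>v v = e \<cdot>\<^sub>v v"
    using C unfolding spectrum_def eigenvalue_def eigenvector_def by auto
  have Bp_nonneg: "0 \<le> (B *\<^sub>v p) $ i" if "i < n" for i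
    using nonneg_mat_mult_vec_nonneg[OF B nonneg p_nonneg] that
    by (simp add: vec_le_def del: index_mult_mat_vec)
  then have p_pos: "0 < p $ i" if "i < n" for i
    using less that by (meson le_less_trans)
  txt \<open>Row \<open>i0\<close> of \<open>B\<close>, where \<open>|v| \<le> t p\<close> is tight, shows \<open>|e| t p\<^sub>i\<^sub>0 \<le> t (B p)\<^sub>i\<^sub>0 < t p\<^sub>i\<^sub>0\<close>.\<close>
  define t where "t = Max ((\<lambda>i. cmod (v $ i) / p $ i) ` {..<n})"
  have "t \<in> (\<lambda>i. cmod (v $ i) / p $ i) ` {..<n}" unfolding t_def using n by (intro Max_in) auto
  then obtain i0 where i0: "i0 < n" and t_i0: "t = cmod (v $ i0) / p $ i0" by auto
  have v_le: "cmod (v $ j) \<le> t * p $ j" if "j < n" for j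
  proof -
    have "cmod (v $ j) / p $ j \<le> t" unfolding t_def using that by (intro Max_ge) auto
    then show ?thesis using p_pos[OF that] by (simp add: pos_divide_le_eq)
  qed
  obtain j where j: "j < n" "v $ j \<noteq> 0" using v by (metis eq_vecI carrier_vecD index_zero_vec)
  then have "0 < t * p $ j" using v_le[of j] by (meson less_le_trans zero_less_norm_iff)
  then have t_pos: "0 < t" using p_pos[OF j(1)] by (simp add: zero_less_mult_iff)
  have "cmod e * cmod (v $ i0) = cmod (\<Sum>j<n. complex_of_real (B $$ (i0, j)) * v $ j)"
    using arg_cong[OF Cv, of "\<lambda>w. w $ i0"] mult_mat_vec_index_sum[OF C v(1) i0] B v(1) i0
    by (simp add: norm_mult)
  also have "\<dots> \<le> (\<Sum>j<n. B $$ (i0, j) * cmod (v $ j))"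
    using nonneg B i0 unfolding nonneg_mat_def
    by (auto intro!: order_trans[OF norm_sum] sum_mono simp: norm_mult)
  also have "\<dots> \<le> (\<Sum>j<n. B $$ (i0, j) * (t * p $ j))"
    using nonneg B i0 v_le unfolding nonneg_mat_def by (auto intro!: sum_mono mult_left_mono)
  also have "\<dots> = t * (B *\<^sub>v p) $ i0"
    unfolding mult_mat_vec_index_sum[OF B p i0] by (simp add: sum_distrib_left ac_simps)
  also have "\<dots> < t * p $ i0" using less i0 t_pos by simp
  also have "\<dots> = cmod (v $ i0)" using t_i0 p_pos[OF i0] by simp
  finally have "cmod e * cmod (v $ i0) < 1 * cmod (v $ i0)" by simp
  then show ?thesis unfolding rho by (meson mult_less_cancel_right norm_ge_zero not_less)
qed

locale multicast_system =
  fixes N :: nat and K :: "nat \<Rightarrow> nat" and g :: "nat \<Rightarrow> nat \<Rightarrow> nat \<Rightarrow> real"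
    and sigma2 :: real and mu :: "real vec"
  assumes N_pos: "0 < N"
    and K_pos: "\<forall>i<N. K i \<ge> 1"
    and g_nonneg: "\<forall>i<N. \<forall>k<K i. \<forall>j<N. g i k j \<ge> 0"
    and g_pos: "\<forall>i<N. \<forall>k<K i. g i k i > 0"
    and sigma_pos: "sigma2 > 0"
    and mu_pos: "\<forall>i<N. mu $ i > 0"
begin

definition choices :: "(nat \<Rightarrow> nat) set" where
  "choices = PiE {..<N} (\<lambda>i. {..<K i})"

definition unicast :: "(nat \<Rightarrow> nat) \<Rightarrow> real mat" where
  "unicast c = mat N N (\<lambda>(i, j). a_entry g mu i (c i) j)"

definition interference :: "(nat \<Rightarrow> nat) \<Rightarrow> real mat" where
  "interference c = 1\<^sub>m N - unicast c"

definition a_vec :: "nat \<Rightarrow> nat \<Rightarrow> real vec" where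
  "a_vec i k = vec N (a_entry g mu i k)"

definition feasible :: "real vec \<Rightarrow> bool" where
  "feasible p \<longleftrightarrow> p \<in> carrier_vec N \<and> vec_le (0\<^sub>v N) p \<and>
     (\<forall>i<N. \<forall>k<K i. n_entry g sigma2 mu i k \<le> a_vec i k \<bullet> p)"

definition unicast_solution :: "(nat \<Rightarrow> nat) \<Rightarrow> real vec \<Rightarrow> bool" where
  "unicast_solution c x \<longleftrightarrow> x \<in> carrier_vec N \<and> vec_le (0\<^sub>v N) x \<and>
     (\<forall>i<N. a_vec i (c i) \<bullet> x = n_entry g sigma2 mu i (c i))"

lemma finite_choices: "finite choices"
  unfolding choices_def by (simp add: finite_PiE)

lemma choices_nonempty: "choices \<noteq> {}"
  using K_pos unfolding choices_def by (auto simp: PiE_eq_empty_iff lessThan_empty_iff)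

lemma choices_update:
  assumes "c \<in> choices" "i < N" "k < K i"
  shows "c(i := k) \<in> choices"
  using assms unfolding choices_def by (auto simp: PiE_iff extensional_def)

lemma dim_interference [simp]:
  "dim_row (interference c) = N" "dim_col (interference c) = N"
  unfolding interference_def unicast_def by simp_all

lemma interference_carrier [simp]: "interference c \<in> carrier_mat N N"
  by (rule carrier_matI) simp_all

lemma index_interference:
  assumes "i < N" "j < N"
  shows "interference c $$ (i, j) = (if i = j then 0 else mu $ i * g i (c i) j / g i (c i) i)"
  using assms unfolding interference_def unicast_def a_entry_def by simp

lemma interference_nonneg:
  assumes "c \<in> choices"
  shows "nonneg_mat (interference c)"
proof -
  have "0 \<le> interference c $$ (i, j)" if "i < N" "j < N" for i j
  proof -
    have "c i < K i" using assms that unfolding choices_def by auto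
    then show ?thesis
      using that g_nonneg g_pos mu_pos by (auto simp: index_interference less_imp_le)
  qed
  then show ?thesis unfolding nonneg_mat_def by simp
qed

lemma interference_mult_vec:
  assumes "p \<in> carrier_vec N" "i < N"
  shows "(interference c *\<^sub>v p) $ i = p $ i - a_vec i (c i) \<bullet> p"
proof -
  have "(unicast c *\<^sub>v p) $ i = a_vec i (c i) \<bullet> p"
    using assms unfolding unicast_def a_vec_def by (auto simp: scalar_prod_def)
  then show ?thesis
    using assms one_minus_mult_mat_vec[of "unicast c" N p] unfolding interference_def unicast_def
    by simp
qed

lemma n_entry_pos:
  assumes "i < N" "k < K i"
  shows "0 < n_entry g sigma2 mu i k"
  using assms g_pos mu_pos sigma_pos unfolding n_entry_def by simp

lemma G_set_eq: "G_set N K g mu = unicast ` choices"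
proof
  show "G_set N K g mu \<subseteq> unicast ` choices"
  proof
    fix G assume "G \<in> G_set N K g mu"
    then obtain c where c: "\<forall>i<N. c i < K i" and G: "G = unicast c"
      unfolding G_set_def unicast_def by auto
    have "unicast c = unicast (restrict c {..<N})"
      unfolding unicast_def by (intro eq_matI) auto
    moreover have "restrict c {..<N} \<in> choices" using c unfolding choices_def by auto
    ultimately show "G \<in> unicast ` choices" using G by blast
  qed
  show "unicast ` choices \<subseteq> G_set N K g mu"
    unfolding G_set_def unicast_def choices_def by (auto simp: PiE_iff)
qed

lemma vec_le_n_vec_A_mat_iff:
  assumes p: "p \<in> carrier_vec N"
  shows "vec_le (n_vec N K g sigma2 mu) (A_mat N K g mu *\<^sub>v p) \<longleftrightarrow>
    (\<forall>i<N. \<forall>k<K i. n_entry g sigma2 mu i k \<le> a_vec i k \<bullet> p)"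
proof -
  let ?rx = "rx_list N K"
  define P where "P = (\<lambda>(i, k). n_entry g sigma2 mu i k \<le> a_vec i k \<bullet> p)"
  have entry: "n_vec N K g sigma2 mu $ r \<le> (A_mat N K g mu *\<^sub>v p) $ r \<longleftrightarrow> P (?rx ! r)"
    if "r < length ?rx" for r
    using that p unfolding A_mat_def n_vec_def a_vec_def P_def
    by (cases "?rx ! r") (auto simp: scalar_prod_def)
  have "vec_le (n_vec N K g sigma2 mu) (A_mat N K g mu *\<^sub>v p) \<longleftrightarrow> (\<forall>r<length ?rx. P (?rx ! r))"
    unfolding vec_le_def using entry by (simp add: A_mat_def n_vec_def)
  also have "\<dots> \<longleftrightarrow> (\<forall>x\<in>set ?rx. P x)" by (simp add: all_set_conv_all_nth)
  also have "set ?rx = {(i, k). i < N \<and> k < K i}" unfolding rx_list_def by auto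
  finally show ?thesis unfolding P_def by auto
qed

lemma Max_pf_lambda_less_1_iff:
  "Max (pf_lambda ` (\<lambda>G. 1\<^sub>m N - G) ` G_set N K g mu) < 1 \<longleftrightarrow>
    (\<forall>c\<in>choices. pf_lambda (interference c) < 1)"
proof -
  have "pf_lambda ` (\<lambda>G. 1\<^sub>m N - G) ` G_set N K g mu = (\<lambda>c. pf_lambda (interference c)) ` choices"
    unfolding G_set_eq interference_def by (simp add: image_image)
  then show ?thesis using finite_choices choices_nonempty by simp
qed

lemma feasible_imp_pf_lambda_less_1:
  assumes p: "feasible p" and c: "c \<in> choices"
  shows "pf_lambda (interference c) < 1"
proof (rule pf_lambda_less_1_if_mult_mat_vec_less[OF interference_carrier N_pos interference_nonneg[OF c]])
  show "p \<in> carrier_vec N" "vec_le (0\<^sub>v N) p" using p unfolding feasible_def by auto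
  have "(interference c *\<^sub>v p) $ i < p $ i" if i: "i < N" for i
  proof -
    have "c i < K i" using c i unfolding choices_def by auto
    then have "0 < a_vec i (c i) \<bullet> p"
      using p n_entry_pos[OF i] unfolding feasible_def by (meson i less_le_trans)
    then show ?thesis using interference_mult_vec[OF \<open>p \<in> carrier_vec N\<close> i] by simp
  qed
  then show "\<forall>i<N. (interference c *\<^sub>v p) $ i < p $ i" by blast
qed

lemma unicast_solution_exists:
  assumes c: "c \<in> choices" and rho: "pf_lambda (interference c) < 1"
  shows "\<exists>x. unicast_solution c x"
proof -
  define d where "d = vec N (\<lambda>i. n_entry g sigma2 mu i (c i))"
  have "vec_le (0\<^sub>v N) d"
    using c unfolding d_def vec_le_def choices_def by (auto simp: PiE_iff intro!: less_imp_le n_entry_pos)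
  moreover have "d \<in> carrier_vec N" unfolding d_def by simp
  ultimately obtain x where x: "x \<in> carrier_vec N" "x = interference c *\<^sub>v x + d" "vec_le (0\<^sub>v N) x"
    using exists_nonneg_fixed_point[OF interference_carrier interference_nonneg[OF c] rho] by blast
  have "a_vec i (c i) \<bullet> x = n_entry g sigma2 mu i (c i)" if i: "i < N" for i
    using arg_cong[OF x(2), of "\<lambda>v. v $ i"] interference_mult_vec[OF x(1) i] i
    unfolding d_def by simp
  then show ?thesis using x unfolding unicast_solution_def by blast
qed

lemma unicast_solution_switch:
  assumes c: "c \<in> choices" and i0: "i0 < N" and k0: "k0 < K i0"
    and rho: "pf_lambda (interference (c(i0 := k0))) < 1"
    and x: "unicast_solution c x" and y: "unicast_solution (c(i0 := k0)) y"
    and violated: "a_vec i0 k0 \<bullet> x < n_entry g sigma2 mu i0 k0"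
  shows "vec_le x y \<and> x $ i0 < y $ i0"
proof -
  define c' where "c' = c(i0 := k0)"
  define B where "B = interference c'"
  define z where "z = y - x"
  have xy: "x \<in> carrier_vec N" "y \<in> carrier_vec N"
    using x y unfolding unicast_solution_def by auto
  then have z: "z \<in> carrier_vec N" unfolding z_def by simp
  define gain where "gain i = a_vec i (c' i) \<bullet> y - a_vec i (c' i) \<bullet> x" for i
  have Bz: "(B *\<^sub>v z) $ i = z $ i - gain i" if i: "i < N" for i
    using interference_mult_vec[OF xy(1) i] interference_mult_vec[OF xy(2) i] i xy
    unfolding B_def z_def gain_def by (simp add: mult_minus_distrib_mat_vec[OF interference_carrier])
  have gain_pos: "0 < gain i0"
    using y violated i0 unfolding gain_def c'_def unicast_solution_def by auto
  have "gain i = 0" if "i < N" "i \<noteq> i0" for i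
    using x y that unfolding gain_def c'_def unicast_solution_def by auto
  then have gain_nonneg: "0 \<le> gain i" if "i < N" for i
    using gain_pos that by (cases "i = i0") auto
  have B: "B \<in> carrier_mat N N" "nonneg_mat B" "pf_lambda B < 1"
    using interference_nonneg[OF choices_update[OF c i0 k0]] rho unfolding B_def c'_def by auto
  then have z_nonneg: "vec_le (0\<^sub>v N) z"
    using nonneg_if_mult_mat_vec_le[OF _ _ _ z] Bz gain_nonneg z by (simp add: vec_le_def)
  then have "0 \<le> (B *\<^sub>v z) $ i0"
    using nonneg_mat_mult_vec_nonneg[OF B(1,2) z_nonneg] i0
    by (simp add: vec_le_def del: index_mult_mat_vec)
  then have "0 < z $ i0" using Bz[OF i0] gain_pos by simp
  then show ?thesis using z_nonneg xy i0 unfolding z_def vec_le_def by auto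
qed

lemma pf_lambda_less_1_imp_feasible:
  assumes rho: "\<forall>c\<in>choices. pf_lambda (interference c) < 1"
  shows "\<exists>p. feasible p"
proof -
  have "\<forall>c\<in>choices. \<exists>x. unicast_solution c x" using unicast_solution_exists rho by blast
  then obtain X where X: "\<forall>c\<in>choices. unicast_solution c (X c)"
    using bchoice[of choices] by blast
  define S where "S c = (\<Sum>i<N. X c $ i)" for c
  have "Max (S ` choices) \<in> S ` choices" using finite_choices choices_nonempty by simp
  then obtain c where c: "c \<in> choices" and "S c = Max (S ` choices)" by auto
  then have S_max: "S c' \<le> S c" if "c' \<in> choices" for c'
    using that finite_choices by simp
  have "n_entry g sigma2 mu i0 k0 \<le> a_vec i0 k0 \<bullet> X c" if i0: "i0 < N" and k0: "k0 < K i0" for i0 k0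
  proof (rule ccontr)
    have c': "c(i0 := k0) \<in> choices" using choices_update[OF c i0 k0] .
    assume "\<not> ?thesis"
    then have "vec_le (X c) (X (c(i0 := k0))) \<and> X c $ i0 < X (c(i0 := k0)) $ i0"
      using unicast_solution_switch[OF c i0 k0 rho[rule_format, OF c'] X[rule_format, OF c]
          X[rule_format, OF c']] by simp
    moreover have "dim_vec (X c) = N" using X c unfolding unicast_solution_def by auto
    ultimately have "S c < S (c(i0 := k0))"
      unfolding S_def vec_le_def using i0 by (intro sum_strict_mono_ex1) auto
    with S_max[OF c'] show False by simp
  qed
  then have "feasible (X c)" using X c unfolding feasible_def unicast_solution_def by blast
  then show ?thesis ..
qed

end

theorem theorem2:
  fixes N :: nat and K :: "nat \<Rightarrow> nat" and g :: "nat \<Rightarrow> nat \<Rightarrow> nat \<Rightarrow> real"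
    and sigma2 :: real and mu :: "real vec"
  assumes N2: "N \<ge> 2"
    and K1: "\<forall>i<N. K i \<ge> 1"
    and g_nonneg: "\<forall>i<N. \<forall>k<K i. \<forall>j<N. g i k j \<ge> 0"
    and g_pos: "\<forall>i<N. \<forall>k<K i. g i k i > 0"
    and sigma_pos: "sigma2 > 0"
    and mu_dim: "dim_vec mu = N"
    and mu_pos: "\<forall>i<N. mu $ i > 0"
    and irred: "\<forall>G\<in>G_set N K g mu. irreducible_mat (1\<^sub>m N - G)"
  shows "(\<exists>p :: real vec. dim_vec p = N \<and> (\<forall>i<N. p $ i \<ge> 0) \<and>
            vec_le (n_vec N K g sigma2 mu) (A_mat N K g mu *\<^sub>v p))
         \<longleftrightarrow> Max (pf_lambda ` (\<lambda>G. 1\<^sub>m N - G) ` G_set N K g mu) < 1"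
proof -
  interpret multicast_system N K g sigma2 mu
    using N2 K1 g_nonneg g_pos sigma_pos mu_pos by unfold_locales auto
  have "feasible p \<longleftrightarrow> dim_vec p = N \<and> (\<forall>i<N. p $ i \<ge> 0) \<and>
      vec_le (n_vec N K g sigma2 mu) (A_mat N K g mu *\<^sub>v p)" for p
    using vec_le_n_vec_A_mat_iff[of p] unfolding feasible_def carrier_vec_def
    by (auto simp: vec_le_def[of "0\<^sub>v N"])
  then show ?thesis
    using Max_pf_lambda_less_1_iff feasible_imp_pf_lambda_less_1 pf_lambda_less_1_imp_feasible
    by blast
qed

end
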